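(* Let $x_1,x_2,x_3,x_4\in\mathbb{Z}^3$ be the vertices of a Fano tetrahedron, and let $\lambda_1,\ldots,\lambda_4$ be non-negative integers with $\gcd(\lambda_1,\ldots,\lambda_4)=1$ such that, with $h=\lambda_1+\cdots+\lambda_4$, the numbers $\lambda_i/h$ are the barycentric coordinates of the origin with respect to $x_1,\ldots,x_4$ (i.e. $\sum_i\lambda_ix_i=0$). Then (i) $\sum_{i=1}^4\left\{\frac{\kappa\lambda_i}{h}\right\}=2$ for all integers $\kappa\in\{2,\ldots,h-2\}$, and (ii) $\gcd(\lambda_i,\lambda_j)=1$ for all $i\neq j$.
   Context: A tetrahedron is called Fano if its vertices lie in $\mathbb{Z}^3$ and the only lattice point it contains other than its vertices is the origin, which lies strictly in its interior. $\{q\}=q-\lfloor q\rfloor$ denotes the fractional part of $q\in\mathbb{Q}$. *)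

theory Defs
  imports "HOL-Analysis.Analysis"
begin

definition lattice_point :: "real^3 \<Rightarrow> bool" where
  "lattice_point v \<longleftrightarrow> (\<forall>i. v $ i \<in> \<int>)"

definition fano_tetrahedron :: "(real^3) set \<Rightarrow> bool" where
  "fano_tetrahedron V \<longleftrightarrow>
     card V = 4 \<and> \<not> affine_dependent V \<and> (\<forall>v\<in>V. lattice_point v) \<and>
     {v \<in> convex hull V. lattice_point v} = insert 0 V \<and>
     0 \<in> interior (convex hull V)"

end

theory Submission
  imports Defs
begin

text \<open>For every real \<open>\<alpha>\<close> the point \<open>\<Sum>\<^sub>i {\<alpha> \<lambda>\<^sub>i} x\<^sub>i\<close> differs from
\<open>\<alpha> \<Sum>\<^sub>i \<lambda>\<^sub>i x\<^sub>i = 0\<close> by an integral combination of the vertices, so it is a lattice point.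
If \<open>\<Sum>\<^sub>i {\<alpha> \<lambda>\<^sub>i} \<le> 1\<close> it also lies in the tetrahedron, hence is the origin or a vertex.
The vertices being affinely independent, their only linear relations are the multiples
of \<open>\<lambda>\<close>, and since all \<open>\<lambda>\<^sub>i > 0\<close> (the origin is interior) this forces
\<open>{\<alpha> \<lambda>\<^sub>i} = t \<lambda>\<^sub>i\<close> for a single \<open>t\<close>.

For \<open>\<alpha> = \<kappa>/h\<close> the sum \<open>\<Sum>\<^sub>i {\<kappa> \<lambda>\<^sub>i/h}\<close> is an integer in \<open>{0,1,2,3}\<close>.
It is not \<open>0\<close> or \<open>1\<close>, since then \<open>h\<close> would divide \<open>\<kappa>\<close> or \<open>\<kappa> - 1\<close>
(as \<open>gcd \<lambda> = 1\<close>), and it is not \<open>3\<close>, since then the sum for \<open>-\<kappa>\<close> would be \<open>1\<close>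
and \<open>h\<close> would divide \<open>\<kappa> + 1\<close>.
For \<open>\<alpha> = \<plusminus>1/d\<close> with \<open>d\<close> dividing \<open>\<lambda>\<^sub>i\<close> and \<open>\<lambda>\<^sub>j\<close>, at most two
fractional parts are nonzero, the sign can be chosen to make their sum at most \<open>1\<close>,
and then \<open>t = 0\<close> forces \<open>d\<close> to divide \<open>1\<close>.\<close>

lemma lattice_point_sum_of_int_scaleR:
  assumes "\<forall>i\<in>I. lattice_point (y i)"
  shows "lattice_point (\<Sum>i\<in>I. of_int (n i) *\<^sub>R y i)"
  using assms unfolding lattice_point_def sum_component by (auto intro!: Ints_sum)

lemma Gcd_eq_1_dvd_mult_cancel:
  fixes l :: "'i \<Rightarrow> nat" and m n :: int
  assumes "Gcd (l ` I) = 1" and "\<forall>i\<in>I. m dvd n * int (l i)"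
  shows "m dvd n"
proof -
  have "m dvd Gcd ((*) n ` int ` l ` I)"
    by (rule Gcd_greatest) (use assms(2) in auto)
  also have "\<dots> = normalize n"
    unfolding Gcd_mult Gcd_int_eq assms(1) by simp
  finally show ?thesis by simp
qed

lemma frac_sign_choice:
  fixes y z :: real
  obtains \<sigma> :: int where "\<sigma> = 1 \<or> \<sigma> = -1" and "frac (of_int \<sigma> * y) + frac (of_int \<sigma> * z) \<le> 1"
proof (cases "frac y + frac z \<le> 1")
  case True
  then show ?thesis using that[of 1] by simp
next
  case False
  then have "frac y \<noteq> 0" "frac z \<noteq> 0"
    using frac_lt_1[of y] frac_lt_1[of z] by (auto simp del: frac_eq_0_iff)
  then show ?thesis using that[of "-1"] False by (simp add: frac_neg)
qed

lemma sum_frac_uminus_eq_1: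
  fixes y :: "'i \<Rightarrow> real"
  assumes "finite I" and "2 \<le> card I" and "(\<Sum>i\<in>I. frac (y i)) = real (card I) - 1"
  shows "(\<Sum>i\<in>I. frac (- y i)) = 1"
proof -
  have defect: "(\<Sum>i\<in>I. 1 - frac (y i)) = 1"
    using assms(3) by (simp add: sum_subtractf)
  have "frac (y i) \<noteq> 0" if "i \<in> I" for i
  proof
    assume "frac (y i) = 0"
    obtain j where j: "j \<in> I" "j \<noteq> i"
      using assms(2) \<open>i \<in> I\<close> by (metis card_2_iff' obtain_subset_with_card_n subset_iff)
    have "(1 - frac (y i)) + (1 - frac (y j)) \<le> (\<Sum>i\<in>I. 1 - frac (y i))"
      using sum_mono2[OF assms(1), of "{i, j}" "\<lambda>i. 1 - frac (y i)"] that j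
      by (simp add: less_imp_le[OF frac_lt_1])
    then show False
      using defect \<open>frac (y i) = 0\<close> frac_lt_1[of "y j"] by (simp del: frac_eq_0_iff)
  qed
  then have "(\<Sum>i\<in>I. frac (- y i)) = (\<Sum>i\<in>I. 1 - frac (y i))"
    by (simp add: frac_neg)
  then show ?thesis using defect by simp
qed

lemma affine_independent_coeffs_eq_0:
  fixes x :: "'i \<Rightarrow> 'a::real_vector"
  assumes "finite I" and "inj_on x I" and "\<not> affine_dependent (x ` I)"
    and "(\<Sum>i\<in>I. c i) = 0" and "(\<Sum>i\<in>I. c i *\<^sub>R x i) = 0" and "k \<in> I"
  shows "c k = 0"
proof -
  define U where "U = c \<circ> inv_into I x"
  have U_x: "U (x i) = c i" if "i \<in> I" for i
    using that assms(2) by (simp add: U_def)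
  have "sum U (x ` I) = 0"
    using assms(4) by (subst sum.reindex_cong[OF assms(2) refl]) (auto simp: U_x)
  moreover have "(\<Sum>v\<in>x ` I. U v *\<^sub>R v) = 0"
    using assms(5) by (subst sum.reindex_cong[OF assms(2) refl]) (auto simp: U_x)
  ultimately show "c k = 0"
    using assms(1,3,6) U_x by (auto simp: affine_dependent_explicit_finite)
qed

lemma affine_independent_relation_proportional:
  fixes x :: "'i \<Rightarrow> 'a::real_vector"
  assumes "finite I" and "inj_on x I" and "\<not> affine_dependent (x ` I)"
    and "(\<Sum>i\<in>I. l i *\<^sub>R x i) = 0" and "(\<Sum>i\<in>I. l i) \<noteq> 0"
    and "(\<Sum>i\<in>I. c i *\<^sub>R x i) = 0"
  obtains t where "\<forall>i\<in>I. c i = t * l i"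
proof
  define t where "t = (\<Sum>i\<in>I. c i) / (\<Sum>i\<in>I. l i)"
  have "(\<Sum>i\<in>I. c i - t * l i) = 0"
    using assms(5) by (simp add: t_def sum_subtractf flip: sum_distrib_left sum_divide_distrib)
  moreover have "(\<Sum>i\<in>I. (c i - t * l i) *\<^sub>R x i) = 0"
    using assms(4,6)
    by (simp add: scaleR_diff_left sum_subtractf scaleR_sum_right[symmetric] flip: scaleR_scaleR)
  ultimately show "\<forall>i\<in>I. c i = t * l i"
    using affine_independent_coeffs_eq_0[OF assms(1-3)] by fastforce
qed

lemma sum_scaleR_mem_convex_hull:
  fixes x :: "'i \<Rightarrow> 'a::real_vector"
  assumes "finite I" and "0 \<in> convex hull (x ` I)"
    and "\<forall>i\<in>I. 0 \<le> c i" and "(\<Sum>i\<in>I. c i) \<le> 1"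
  shows "(\<Sum>i\<in>I. c i *\<^sub>R x i) \<in> convex hull (x ` I)"
proof (cases "(\<Sum>i\<in>I. c i) = 0")
  case True
  then have "\<forall>i\<in>I. c i = 0"
    using assms(1,3) by (simp add: sum_nonneg_eq_0_iff)
  then show ?thesis using assms(2) by simp
next
  case False
  define s where "s = (\<Sum>i\<in>I. c i)"
  have s: "0 < s" "s \<le> 1"
    using False assms(3,4) sum_nonneg[of I c] by (auto simp: s_def)
  have "(\<Sum>i\<in>I. (c i / s) *\<^sub>R x i) \<in> convex hull (x ` I)"
    using assms(1,3) s by (intro convex_sum) (auto simp: s_def sum_divide_distrib[symmetric] hull_inc)
  then have "s *\<^sub>R (\<Sum>i\<in>I. (c i / s) *\<^sub>R x i) + (1 - s) *\<^sub>R 0 \<in> convex hull (x ` I)"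
    using s assms(2) by (intro convexD) auto
  moreover have "s *\<^sub>R (\<Sum>i\<in>I. (c i / s) *\<^sub>R x i) = (\<Sum>i\<in>I. c i *\<^sub>R x i)"
    using s by (simp add: scaleR_sum_right)
  ultimately show ?thesis by simp
qed

lemma interior_convex_hull_relation_nonzero:
  fixes x :: "'i \<Rightarrow> 'a::real_normed_vector"
  assumes "finite I" and "inj_on x I" and "\<not> affine_dependent (x ` I)"
    and "(\<Sum>i\<in>I. l i *\<^sub>R x i) = 0" and "(\<Sum>i\<in>I. l i) \<noteq> 0"
    and "0 \<in> interior (convex hull (x ` I))" and "k \<in> I"
  shows "l k \<noteq> 0"
proof
  assume "l k = 0"
  obtain e where e: "e > 0" "ball 0 e \<subseteq> convex hull (x ` I)"
    using assms(6) by (auto simp: mem_interior)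
  define \<delta> where "\<delta> = e / (norm (x k) + 1)"
  have "\<delta> > 0" using e(1) by (simp add: \<delta>_def add_nonneg_pos)
  have "norm (- \<delta> *\<^sub>R x k) < e"
    using e(1) by (simp add: \<delta>_def field_simps add_pos_nonneg)
  then have "- \<delta> *\<^sub>R x k \<in> convex hull (x ` I)"
    using e(2) by auto
  then obtain u where u: "\<forall>v\<in>x ` I. 0 \<le> u v" "(\<Sum>v\<in>x ` I. u v *\<^sub>R v) = - \<delta> *\<^sub>R x k"
    using assms(1) by (auto simp: convex_hull_finite)
  \<comment> \<open>Moving \<open>-\<delta> x\<^sub>k\<close> to the other side gives a relation with positive \<open>k\<close>-th coefficient.\<close>
  define c where "c i = u (x i) + (if i = k then \<delta> else 0)" for i
  have "(\<Sum>i\<in>I. c i *\<^sub>R x i) = (\<Sum>v\<in>x ` I. u v *\<^sub>R v) + \<delta> *\<^sub>R x k"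
    using assms(1,7) by (simp add: c_def scaleR_add_left sum.distrib sum.reindex[OF assms(2)] if_distrib[of "\<lambda>a. a *\<^sub>R _"] cong: if_cong)
  then have "(\<Sum>i\<in>I. c i *\<^sub>R x i) = 0"
    using u(2) by simp
  then obtain t where "\<forall>i\<in>I. c i = t * l i"
    using affine_independent_relation_proportional[OF assms(1-5)] by blast
  then have "c k = 0" using \<open>l k = 0\<close> assms(7) by simp
  moreover have "c k > 0"
    using u(1) assms(7) \<open>\<delta> > 0\<close> by (simp add: c_def add_nonneg_pos)
  ultimately show False by simp
qed

locale fano_relation =
  fixes x :: "'i \<Rightarrow> real^3" and lam :: "'i \<Rightarrow> nat" and I :: "'i set" and h :: nat
  assumes inj: "inj_on x I"
    and fano: "fano_tetrahedron (x ` I)"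
    and Gcd_lam: "Gcd (lam ` I) = 1"
    and h_def: "h = (\<Sum>i\<in>I. lam i)"
    and relation: "(\<Sum>i\<in>I. real (lam i) *\<^sub>R x i) = 0"
begin

lemma card_index: "card I = 4"
  using fano card_image[OF inj] by (simp add: fano_tetrahedron_def)

lemma finite_index: "finite I"
  using card_index by (simp add: card_ge_0_finite)

lemma lattice_point_vertex: "i \<in> I \<Longrightarrow> lattice_point (x i)"
  using fano by (simp add: fano_tetrahedron_def)

lemma h_pos: "0 < h"
proof (rule ccontr)
  assume "\<not> 0 < h"
  then have "lam ` I \<subseteq> {0}"
    using finite_index by (auto simp: h_def)
  then have "Gcd (lam ` I) = 0"
    by (simp add: Gcd_0_iff)
  with Gcd_lam show False by simp
qed

lemma sum_lam_eq_h: "(\<Sum>i\<in>I. real (lam i)) = real h"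
  by (simp add: h_def)

lemma relation_proportional:
  assumes "(\<Sum>i\<in>I. c i *\<^sub>R x i) = 0"
  obtains t where "\<forall>i\<in>I. c i = t * real (lam i)"
  using affine_independent_relation_proportional[OF finite_index inj _ relation _ assms] fano h_pos
  by (auto simp: fano_tetrahedron_def sum_lam_eq_h)

lemma lam_pos: "i \<in> I \<Longrightarrow> 0 < lam i"
  using interior_convex_hull_relation_nonzero[OF finite_index inj _ relation] fano h_pos
  by (auto simp: fano_tetrahedron_def sum_lam_eq_h)

lemma other_index:
  obtains j where "j \<in> I" and "j \<noteq> k"
proof -
  have "card (I - {k}) \<noteq> 0"
    by (simp add: card_Diff_singleton_if card_index)
  then show thesis
    using that by (metis DiffE all_not_in_conv card.empty singletonI)
qed

lemma lattice_point_combination_cases: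
  assumes "\<forall>i\<in>I. 0 \<le> c i" and "(\<Sum>i\<in>I. c i) \<le> 1"
    and "lattice_point (\<Sum>i\<in>I. c i *\<^sub>R x i)"
  obtains t where "\<forall>i\<in>I. c i = t * real (lam i)"
    | k t where "k \<in> I" and "\<forall>i\<in>I. c i = (if i = k then 1 else 0) + t * real (lam i)"
proof -
  let ?p = "\<Sum>i\<in>I. c i *\<^sub>R x i"
  have "0 \<in> convex hull (x ` I)"
    using fano interior_subset by (auto simp: fano_tetrahedron_def)
  then have "?p \<in> convex hull (x ` I)"
    using sum_scaleR_mem_convex_hull[OF finite_index _ assms(1,2)] by blast
  then have "?p \<in> insert 0 (x ` I)"
    using fano assms(3) by (auto simp: fano_tetrahedron_def)
  then consider "?p = 0" | k where "k \<in> I" "?p = x k" by blast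
  then show ?thesis
  proof cases
    case 1
    then show ?thesis using relation_proportional that(1) by blast
  next
    case 2
    have "(\<Sum>i\<in>I. (c i - (if i = k then 1 else 0)) *\<^sub>R x i) = ?p - x k"
      using 2(1) finite_index
      by (simp add: scaleR_diff_left sum_subtractf if_distrib[of "\<lambda>a. a *\<^sub>R _"] cong: if_cong)
    also have "\<dots> = 0" using 2(2) by simp
    finally obtain t where "\<forall>i\<in>I. c i - (if i = k then 1 else 0) = t * real (lam i)"
      by (rule relation_proportional)
    then show ?thesis using that(2)[OF 2(1)] by (auto simp: algebra_simps)
  qed
qed

lemma lattice_point_frac_combination:
  "lattice_point (\<Sum>i\<in>I. frac (\<alpha> * real (lam i)) *\<^sub>R x i)"
proof -
  have "(\<Sum>i\<in>I. (\<alpha> * real (lam i)) *\<^sub>R x i) = 0"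
    using relation by (simp add: scaleR_sum_right[symmetric] flip: scaleR_scaleR)
  then have "(\<Sum>i\<in>I. frac (\<alpha> * real (lam i)) *\<^sub>R x i)
      = (\<Sum>i\<in>I. of_int (- \<lfloor>\<alpha> * real (lam i)\<rfloor>) *\<^sub>R x i)"
    by (simp add: frac_def scaleR_diff_left sum_subtractf sum_negf)
  also have "lattice_point \<dots>"
    using lattice_point_vertex by (intro lattice_point_sum_of_int_scaleR) auto
  finally show ?thesis .
qed

lemma frac_proportional:
  assumes "(\<Sum>i\<in>I. frac (\<alpha> * real (lam i))) \<le> 1"
  obtains t where "\<forall>i\<in>I. frac (\<alpha> * real (lam i)) = t * real (lam i)"
proof (rule lattice_point_combination_cases[OF _ assms lattice_point_frac_combination])
  fix k t
  assume k: "k \<in> I" and t: "\<forall>i\<in>I. frac (\<alpha> * real (lam i)) = (if i = k then 1 else 0) + t * real (lam i)"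
  obtain j where j: "j \<in> I" "j \<noteq> k" using other_index .
  have "1 + t * real (lam k) < 1"
    using t k frac_lt_1[of "\<alpha> * real (lam k)"] by simp
  then have "t < 0"
    using lam_pos[OF k] by (simp add: mult_less_0_iff)
  then have "frac (\<alpha> * real (lam j)) < 0"
    using t j lam_pos[OF j(1)] by (simp add: mult_less_0_iff)
  then show thesis using frac_ge_0 not_le by blast
qed auto

lemma dvd_if_frac_eq_multiple:
  assumes "0 < q"
    and "\<forall>i\<in>I. frac (of_int a * real (lam i) / real q) = of_int m * real (lam i) / real q"
  shows "int q dvd a - m"
proof (rule Gcd_eq_1_dvd_mult_cancel[OF Gcd_lam], intro ballI)
  fix i assume "i \<in> I"
  let ?y = "of_int a * real (lam i) / real q"
  have "of_int ((a - m) * int (lam i)) / of_int (int q) = (of_int \<lfloor>?y\<rfloor> :: real)"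
    using assms(2) \<open>i \<in> I\<close> by (simp add: frac_def algebra_simps diff_divide_distrib)
  then have "of_int ((a - m) * int (lam i)) / of_int (int q) \<in> (\<int> :: real set)"
    by simp
  then show "int q dvd (a - m) * int (lam i)"
    using assms(1) by (simp only: of_int_div_of_int_in_Ints_iff) simp
qed

lemma h_dvd_if_frac_sum:
  assumes "(\<Sum>i\<in>I. frac (of_int a * real (lam i) / real h)) = of_int m" and "m = 0 \<or> m = 1"
  shows "int h dvd a - m"
proof -
  have "(\<Sum>i\<in>I. frac (of_int a / real h * real (lam i))) \<le> 1"
    using assms by auto
  then obtain t where "\<forall>i\<in>I. frac (of_int a / real h * real (lam i)) = t * real (lam i)"
    by (rule frac_proportional)
  then have t: "\<forall>i\<in>I. frac (of_int a * real (lam i) / real h) = t * real (lam i)"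
    by simp
  have "of_int m = (\<Sum>i\<in>I. t * real (lam i))"
    using assms(1) t by simp
  also have "\<dots> = t * real h"
    by (simp add: sum_distrib_left[symmetric] sum_lam_eq_h)
  finally have "t = of_int m / real h"
    using h_pos by (simp add: field_simps)
  then show ?thesis
    using dvd_if_frac_eq_multiple[OF h_pos] t by simp
qed

lemma sum_frac_eq_2:
  assumes "2 \<le> \<kappa>" and "\<kappa> \<le> int h - 2"
  shows "(\<Sum>i\<in>I. frac (of_int \<kappa> * real (lam i) / real h)) = 2"
proof -
  let ?S = "\<lambda>a. \<Sum>i\<in>I. frac (of_int a * real (lam i) / real h)"
  have not_dvd: "\<not> int h dvd n" if "0 < n" "n < int h" for n
    using zdvd_imp_le[OF _ that(1)] that(2) by fastforce
  have "?S \<kappa> = of_int (\<kappa> - (\<Sum>i\<in>I. \<lfloor>of_int \<kappa> * real (lam i) / real h\<rfloor>))"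
    using h_pos by (simp add: frac_def sum_subtractf sum_lam_eq_h flip: sum_divide_distrib sum_distrib_left)
  then obtain m where m: "?S \<kappa> = of_int m" by blast
  have "0 \<le> ?S \<kappa>" by (simp add: sum_nonneg)
  moreover have "?S \<kappa> < (\<Sum>i\<in>I. 1)"
    using finite_index card_index by (intro sum_strict_mono) (auto simp: frac_lt_1)
  ultimately have "0 \<le> m" "m < 4"
    using m card_index by auto
  moreover have "m \<noteq> 0" "m \<noteq> 1"
    using h_dvd_if_frac_sum[OF m] not_dvd[of \<kappa>] not_dvd[of "\<kappa> - 1"] assms by auto
  moreover have "m \<noteq> 3"
  proof
    assume "m = 3"
    then have "?S (- \<kappa>) = 1"
      using sum_frac_uminus_eq_1[OF finite_index] m card_index by simp
    then have "int h dvd - \<kappa> - 1"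
      using h_dvd_if_frac_sum[of "- \<kappa>" 1] by simp
    then have "int h dvd \<kappa> + 1"
      using dvd_minus_iff[of "int h" "\<kappa> + 1"] by simp
    then show False using not_dvd[of "\<kappa> + 1"] assms by simp
  qed
  ultimately have "m = 2" by auto
  then show ?thesis using m by simp
qed

lemma gcd_lam_eq_1:
  assumes "i \<in> I" and "j \<in> I" and "i \<noteq> j"
  shows "gcd (lam i) (lam j) = 1"
proof -
  define d where "d = gcd (lam i) (lam j)"
  have "0 < d" using lam_pos[OF assms(1)] by (simp add: d_def)
  have "card (I - {i, j}) = 2"
    using assms finite_index card_index by (subst card_Diff_subset) auto
  then obtain k l where kl: "I - {i, j} = {k, l}" by (auto simp: card_2_iff)
  obtain \<sigma> where \<sigma>: "\<sigma> = 1 \<or> \<sigma> = -1"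
    and frac_kl: "frac (of_int \<sigma> * (real (lam k) / real d)) + frac (of_int \<sigma> * (real (lam l) / real d)) \<le> 1"
    by (rule frac_sign_choice)
  let ?f = "\<lambda>m. frac (of_int \<sigma> / real d * real (lam m))"
  have f_ij: "?f m = 0" if "m \<in> {i, j}" for m
  proof -
    have "int d dvd \<sigma> * int (lam m)"
      using that by (auto simp: d_def)
    then show ?thesis
      using of_int_div_of_int_in_Ints_iff[of "\<sigma> * int (lam m)" "int d", where 'a = real] by simp
  qed
  then have "(\<Sum>m\<in>I. ?f m) = (\<Sum>m\<in>{k, l}. ?f m)"
    using finite_index kl by (intro sum.mono_neutral_cong_right) auto
  also have "\<dots> \<le> 1"
    using frac_kl by (cases "k = l") (simp_all add: less_imp_le[OF frac_lt_1])
  finally obtain t where t: "\<forall>m\<in>I. ?f m = t * real (lam m)"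
    by (rule frac_proportional)
  have "t = 0"
    using t f_ij[of i] assms(1) lam_pos[OF assms(1)] by auto
  then have "int d dvd \<sigma> - 0"
    using dvd_if_frac_eq_multiple[OF \<open>0 < d\<close>, of \<sigma> 0] t by simp
  then show ?thesis
    using \<sigma> by (auto simp: d_def)
qed

end

theorem proposition2p5:
  fixes x :: "nat \<Rightarrow> real^3" and lam :: "nat \<Rightarrow> nat" and h :: nat
  assumes "inj_on x {1..4}"
    and "fano_tetrahedron (x ` {1..4})"
    and "Gcd (lam ` {1..4}) = 1"
    and "h = (\<Sum>i\<in>{1..4}. lam i)"
    and "(\<Sum>i\<in>{1..4}. real (lam i) *\<^sub>R x i) = 0"
  shows "(\<forall>\<kappa>::int. 2 \<le> \<kappa> \<and> \<kappa> \<le> int h - 2 \<longrightarrow>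
            (\<Sum>i\<in>{1..4}. frac (real_of_int \<kappa> * real (lam i) / real h)) = 2)
       \<and> (\<forall>i\<in>{1..4}. \<forall>j\<in>{1..4}. i \<noteq> j \<longrightarrow> gcd (lam i) (lam j) = 1)"
proof -
  interpret fano_relation x lam "{1..4}" h
    using assms by unfold_locales
  show ?thesis
    using sum_frac_eq_2 gcd_lam_eq_1 by blast
qed

end
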